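(* For all integers $d\ge1$ and $p\ge0$, the best constant $C_{p,d}$ in $$\|\partial_{x_i}v\|_{L^2(K^d)}\le C_{p,d}\|v\|_{L^2(K^d)}\qquad\forall v\in\mathbb{P}_p(K^d),\ \forall i\in\{1,\dots,d\}$$ satisfies $C_{p,d}\le\frac{\sqrt5}{4}(2\sqrt2)^d\,C_{p,1}$, where $K^d:=\{x\in\mathbb{R}^d: x_i\ge0\ \forall i,\ \sum_i x_i\le1\}$ is the unit simplex.
   Context: $\mathbb{P}_p(K^d)$ is the space of polynomials of total degree at most $p$ on $K^d$. $C_{p,1}$ denotes the best constant in the univariate inverse inequality $\|v'\|_{L^2(0,1)}\le C_{p,1}\|v\|_{L^2(0,1)}$ for all polynomials $v$ of degree at most $p$ on $(0,1)$. *)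

theory Defs
  imports "HOL-Analysis.Analysis" "HOL-Computational_Algebra.Polynomial"
begin

definition unit_simplex :: "(real ^ 'n::finite) set" where
  "unit_simplex = {x. (\<forall>i. 0 \<le> x $ i) \<and> (\<Sum>i\<in>UNIV. x $ i) \<le> 1}"

definition multi_indices :: "nat \<Rightarrow> ('n::finite \<Rightarrow> nat) set" where
  "multi_indices p = {\<alpha>. (\<Sum>i\<in>UNIV. \<alpha> i) \<le> p}"

definition poly_space :: "nat \<Rightarrow> (real ^ 'n::finite \<Rightarrow> real) set" where
  "poly_space p = {v. \<exists>c :: ('n \<Rightarrow> nat) \<Rightarrow> real.
      v = (\<lambda>x. \<Sum>\<alpha>\<in>multi_indices p. c \<alpha> * (\<Prod>i\<in>UNIV. (x $ i) ^ \<alpha> i))}"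

definition partial :: "'n::finite \<Rightarrow> (real ^ 'n \<Rightarrow> real) \<Rightarrow> real ^ 'n \<Rightarrow> real" where
  "partial i v x = deriv (\<lambda>t. v (x + t *\<^sub>R axis i 1)) 0"

definition L2_norm_on :: "'a::euclidean_space set \<Rightarrow> ('a \<Rightarrow> real) \<Rightarrow> real" where
  "L2_norm_on S v = sqrt (integral S (\<lambda>x. (v x)\<^sup>2))"

definition best_const_simplex :: "'n::finite itself \<Rightarrow> nat \<Rightarrow> real" where
  "best_const_simplex _ p = Inf {C. 0 \<le> C \<and>
     (\<forall>v \<in> (poly_space p :: (real ^ 'n \<Rightarrow> real) set). \<forall>i::'n.
        L2_norm_on (unit_simplex :: (real ^ 'n) set) (partial i v)
          \<le> C * L2_norm_on (unit_simplex :: (real ^ 'n) set) v)}"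

definition best_const_1 :: "nat \<Rightarrow> real" where
  "best_const_1 p = Inf {C. 0 \<le> C \<and>
     (\<forall>q :: real poly. degree q \<le> p \<longrightarrow>
        L2_norm_on {0..1} (poly (pderiv q)) \<le> C * L2_norm_on {0..1} (poly q))}"

end

theory Submission
  imports Defs
begin

(* Restricted to a line, a polynomial of total degree p is a univariate polynomial of degree p.
   Rescaling the univariate inequality to a chord of length at least c therefore gives
   int (d_w v)^2 <= (C_{p,1}/c)^2 int v^2 along every chord, and integrating over all lines
   parallel to w bounds the integral of (d_w v)^2 over a region G by (C_{p,1}/c)^2 times the
   integral of v^2 over the simplex, provided every chord through G is at least c long.
   Cover the simplex by the points whose chord in direction e_i is at least 1/2 long and by the
   regions x_k >= 1/(2(d-1)), k ~= i; on the latter d_i = d_{e_i - e_k} + d_{e_k}, and both of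
   these chords are at least x_k long. Summing gives
   C_{p,d}^2 <= (4 + 16 (d-1)^3) C_{p,1}^2 <= 5/16 8^d C_{p,1}^2.
   Finiteness of C_{p,1} comes from the equivalence of the L^2 norm on (0,1) with the
   Euclidean norm of the coefficients, a compactness argument. *)

definition coeff_sqnorm :: "nat \<Rightarrow> real poly \<Rightarrow> real" where
  "coeff_sqnorm p q = (\<Sum>k\<le>p. (coeff q k)\<^sup>2)"

lemma coeff_sqnorm_nonneg: "0 \<le> coeff_sqnorm p q"
  unfolding coeff_sqnorm_def by (simp add: sum_nonneg)

lemma coeff_sqnorm_smult: "coeff_sqnorm p (smult a q) = a\<^sup>2 * coeff_sqnorm p q"
  unfolding coeff_sqnorm_def by (simp add: power_mult_distrib sum_distrib_left)

lemma coeff_sqnorm_pderiv_le: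
  fixes q :: "real poly"
  assumes "degree q \<le> p"
  shows "coeff_sqnorm p (pderiv q) \<le> (real p + 1)\<^sup>2 * coeff_sqnorm p q"
proof -
  have "coeff_sqnorm p (pderiv q) = (\<Sum>k\<le>p. (real (Suc k))\<^sup>2 * (coeff q (Suc k))\<^sup>2)"
    unfolding coeff_sqnorm_def by (simp add: coeff_pderiv power_mult_distrib)
  also have "\<dots> \<le> (\<Sum>k\<le>p. (real p + 1)\<^sup>2 * (coeff q (Suc k))\<^sup>2)"
    by (intro sum_mono mult_right_mono power_mono) auto
  also have "\<dots> = (real p + 1)\<^sup>2 * ((\<Sum>k\<le>Suc p. (coeff q k)\<^sup>2) - (coeff q 0)\<^sup>2)"
    by (simp only: sum.atMost_Suc_shift) (simp add: sum_distrib_left)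
  also have "\<dots> \<le> (real p + 1)\<^sup>2 * coeff_sqnorm p q"
    using assms by (intro mult_left_mono) (simp_all add: coeff_sqnorm_def coeff_eq_0)
  finally show ?thesis by simp
qed

lemma poly_eq_sum_atMost:
  fixes q :: "'a::comm_semiring_1 poly"
  assumes "degree q \<le> p"
  shows "poly q x = (\<Sum>k\<le>p. coeff q k * x ^ k)"
  unfolding poly_altdef
  by (rule sum.mono_neutral_left) (use assms in \<open>auto simp: coeff_eq_0\<close>)

lemma poly_sq_le_coeff_sqnorm:
  fixes q :: "real poly"
  assumes "degree q \<le> p" "x \<in> {0..1}"
  shows "(poly q x)\<^sup>2 \<le> (real p + 1) * coeff_sqnorm p q"
proof -
  have "(poly q x)\<^sup>2 \<le> coeff_sqnorm p q * (\<Sum>k\<le>p. (x ^ k)\<^sup>2)"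
    unfolding poly_eq_sum_atMost[OF assms(1)] coeff_sqnorm_def by (rule Cauchy_Schwarz_ineq_sum)
  also have "\<dots> \<le> coeff_sqnorm p q * (\<Sum>k\<le>p. 1)"
    using assms(2) by (intro mult_left_mono sum_mono coeff_sqnorm_nonneg)
      (simp add: power_le_one power2_le_iff_abs_le)
  finally show ?thesis by (simp add: ac_simps)
qed

lemma integrable_poly_sq: "(\<lambda>x. (poly q x)\<^sup>2 :: real) integrable_on {a..b}"
  by (intro integrable_continuous_interval continuous_intros)

lemma integral_poly_sq_nonneg: "0 \<le> integral {a..b} (\<lambda>x. (poly q x)\<^sup>2 :: real)"
  by (rule Henstock_Kurzweil_Integration.integral_nonneg[OF integrable_poly_sq]) simp

lemma integral_poly_sq_le_coeff_sqnorm: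
  fixes q :: "real poly"
  assumes "degree q \<le> p"
  shows "integral {0..1} (\<lambda>x. (poly q x)\<^sup>2) \<le> (real p + 1) * coeff_sqnorm p q"
proof -
  have "integral {0..1} (\<lambda>x. (poly q x)\<^sup>2) \<le> integral {0..1} (\<lambda>x::real. (real p + 1) * coeff_sqnorm p q)"
    by (intro integral_le integrable_poly_sq integrable_const_ivl poly_sq_le_coeff_sqnorm[OF assms])
  then show ?thesis by simp
qed

lemma poly_eq_0_if_integral_sq_eq_0:
  fixes q :: "real poly"
  assumes "integral {0..1} (\<lambda>x. (poly q x)\<^sup>2) = 0"
  shows "q = 0"
proof -
  have "((\<lambda>x. (poly q x)\<^sup>2) has_integral 0) (cbox 0 (1::real))"
    using integrable_integral[OF integrable_poly_sq[of q 0 1]] assms by simp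
  then have "(poly q x)\<^sup>2 = 0" if "x \<in> {0..1}" for x
    by (rule has_integral_0_cbox_imp_0[rotated 2]) (use that in \<open>auto intro!: continuous_intros\<close>)
  then have "{0..1::real} \<subseteq> {x. poly q x = 0}" by auto
  then show ?thesis
    by (metis finite_subset infinite_Icc poly_roots_finite zero_less_one)
qed

lemma power2_sum_le: "((a::real) + b)\<^sup>2 \<le> 2 * a\<^sup>2 + 2 * b\<^sup>2"
proof -
  have "0 \<le> (a - b)\<^sup>2" by simp
  then show ?thesis by (simp add: power2_diff power2_sum)
qed

lemma poly_coeffwise_convergent_subseq:
  fixes Q :: "nat \<Rightarrow> real poly"
  assumes deg: "\<And>n. degree (Q n) \<le> p" and bnd: "\<And>n k. \<bar>coeff (Q n) k\<bar> \<le> B"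
  obtains r L where "strict_mono r" "degree L \<le> p"
    "\<And>k. (\<lambda>n. coeff (Q (r n)) k) \<longlonglongrightarrow> coeff L k"
proof -
  have "\<forall>K\<subseteq>{..p}. \<exists>l::nat \<Rightarrow> real. \<exists>r. strict_mono r \<and>
      (\<forall>e>0. \<forall>\<^sub>F n in sequentially. \<forall>k\<in>K. dist (coeff (Q (r n)) k) (l k) < e)"
    by (rule compact_lemma_general[where f="\<lambda>n k. coeff (Q n) k" and proj="\<lambda>x k. x k"
          and unproj="\<lambda>x. x"]) (auto simp: bounded_iff intro: bnd)
  then obtain l r where r: "strict_mono r"
    and conv: "\<And>e. e > 0 \<Longrightarrow> \<forall>\<^sub>F n in sequentially. \<forall>k\<in>{..p}. dist (coeff (Q (r n)) k) (l k) < e"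
    by blast
  define L where "L = (\<Sum>k\<le>p. monom (l k) k)"
  have coeff_L: "coeff L k = (if k \<le> p then l k else 0)" for k
    by (simp add: L_def coeff_sum)
  show thesis
  proof (rule that[OF r])
    show "degree L \<le> p"
      unfolding L_def by (rule degree_sum_le) (auto intro: order_trans[OF degree_monom_le])
    show "(\<lambda>n. coeff (Q (r n)) k) \<longlonglongrightarrow> coeff L k" for k
    proof (cases "k \<le> p")
      case True
      show ?thesis
      proof (rule tendstoI)
        fix e :: real assume "0 < e"
        from conv[OF this] show "\<forall>\<^sub>F n in sequentially. dist (coeff (Q (r n)) k) (coeff L k) < e"
          by eventually_elim (use True in \<open>auto simp: coeff_L\<close>)
      qed
    next
      case False
      then have "coeff (Q (r n)) k = 0" for n
        using deg by (meson coeff_eq_0 le_less_trans not_le)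
      then show ?thesis using False by (simp add: coeff_L)
    qed
  qed
qed

lemma eq_0_if_integral_poly_sq_tendsto_0:
  fixes Q :: "nat \<Rightarrow> real poly"
  assumes deg: "\<And>n. degree (Q n) \<le> p" "degree L \<le> p"
    and lim: "\<And>k. (\<lambda>n. coeff (Q n) k) \<longlonglongrightarrow> coeff L k"
    and vanish: "(\<lambda>n. integral {0..1} (\<lambda>x. (poly (Q n) x)\<^sup>2)) \<longlonglongrightarrow> 0"
  shows "L = 0"
proof -
  define u where "u n = 2 * integral {0..1} (\<lambda>x. (poly (Q n) x)\<^sup>2)
    + 2 * ((real p + 1) * coeff_sqnorm p (L - Q n))" for n
  have "integral {0..1} (\<lambda>x. (poly L x)\<^sup>2) \<le> u n" for n
  proof -
    have "integral {0..1} (\<lambda>x. (poly L x)\<^sup>2)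
        \<le> integral {0..1} (\<lambda>x. 2 * (poly (Q n) x)\<^sup>2 + 2 * (poly (L - Q n) x)\<^sup>2)"
    proof (rule integral_le)
      fix x
      show "(poly L x)\<^sup>2 \<le> 2 * (poly (Q n) x)\<^sup>2 + 2 * (poly (L - Q n) x)\<^sup>2"
        using power2_sum_le[of "poly (Q n) x" "poly (L - Q n) x"] by simp
    qed (auto intro!: integrable_continuous_interval continuous_intros)
    also have "\<dots> = 2 * integral {0..1} (\<lambda>x. (poly (Q n) x)\<^sup>2)
                   + 2 * integral {0..1} (\<lambda>x. (poly (L - Q n) x)\<^sup>2)"
      by (subst integral_add) (auto intro!: integrable_continuous_interval continuous_intros)
    also have "\<dots> \<le> u n"
      unfolding u_def
      by (intro add_mono mult_left_mono integral_poly_sq_le_coeff_sqnorm degree_diff_le deg) simp_all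
    finally show ?thesis .
  qed
  moreover have "u \<longlonglongrightarrow> 2 * 0 + 2 * ((real p + 1) * (\<Sum>k\<le>p. (coeff L k - coeff L k)\<^sup>2))"
    unfolding u_def coeff_sqnorm_def coeff_diff by (intro tendsto_intros lim vanish)
  ultimately have "integral {0..1} (\<lambda>x. (poly L x)\<^sup>2) \<le> 0"
    by (intro LIMSEQ_le_const) auto
  then show "L = 0"
    using integral_poly_sq_nonneg[where q=L and a=0 and b=1]
    by (intro poly_eq_0_if_integral_sq_eq_0) linarith
qed

lemma coeff_sq_le_coeff_sqnorm:
  assumes "degree q \<le> p"
  shows "(coeff q k)\<^sup>2 \<le> coeff_sqnorm p q"
proof (cases "k \<le> p")
  case True
  then show ?thesis unfolding coeff_sqnorm_def by (intro member_le_sum) auto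
next
  case False
  then show ?thesis using assms by (simp add: coeff_eq_0 coeff_sqnorm_nonneg)
qed

lemma normalized_poly_integral_sq_less:
  fixes q :: "real poly"
  assumes deg: "degree q \<le> p"
    and small: "integral {0..1} (\<lambda>x. (poly q x)\<^sup>2) < m * coeff_sqnorm p q"
  shows "\<exists>q'. degree q' \<le> p \<and> coeff_sqnorm p q' = 1 \<and> integral {0..1} (\<lambda>x. (poly q' x)\<^sup>2) < m"
proof -
  have "0 < m * coeff_sqnorm p q"
    using small integral_poly_sq_nonneg[where q=q and a=0 and b=1] by linarith
  then have pos: "0 < coeff_sqnorm p q"
    using coeff_sqnorm_nonneg[of p q] by (auto simp: zero_less_mult_iff)
  define q' where "q' = smult (1 / sqrt (coeff_sqnorm p q)) q"
  have "integral {0..1} (\<lambda>x. (poly q' x)\<^sup>2) = integral {0..1} (\<lambda>x. (poly q x)\<^sup>2) / coeff_sqnorm p q"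
    using pos by (simp add: q'_def power_mult_distrib power_divide)
  then have "integral {0..1} (\<lambda>x. (poly q' x)\<^sup>2) < m"
    using small pos by (simp add: divide_less_eq)
  moreover have "coeff_sqnorm p q' = 1"
    using pos by (simp add: q'_def coeff_sqnorm_smult power_divide)
  moreover have "degree q' \<le> p" using deg by (simp add: q'_def)
  ultimately show ?thesis by blast
qed

lemma coeff_sqnorm_le_integral_poly_sq:
  "\<exists>m>0. \<forall>q::real poly. degree q \<le> p \<longrightarrow>
     m * coeff_sqnorm p q \<le> integral {0..1} (\<lambda>x. (poly q x)\<^sup>2)"
proof (rule ccontr)
  assume "\<not> ?thesis"
  then have "\<exists>q. degree q \<le> p \<and> coeff_sqnorm p q = 1 \<and>
      integral {0..1} (\<lambda>x. (poly q x)\<^sup>2) < inverse (Suc n)" for n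
    by (metis normalized_poly_integral_sq_less not_le of_nat_0_less_iff zero_less_Suc
        positive_imp_inverse_positive)
  then obtain Q where deg: "\<And>n. degree (Q n) \<le> p" and unit: "\<And>n. coeff_sqnorm p (Q n) = 1"
    and small: "\<And>n. integral {0..1} (\<lambda>x. (poly (Q n) x)\<^sup>2) < inverse (Suc n)"
    by metis
  have "\<bar>coeff (Q n) k\<bar> \<le> 1" for n k
    using coeff_sq_le_coeff_sqnorm[OF deg, of n k] unit by (simp add: abs_square_le_1)
  then obtain r L where r: "strict_mono r" and deg_L: "degree L \<le> p"
    and lim: "\<And>k. (\<lambda>n. coeff (Q (r n)) k) \<longlonglongrightarrow> coeff L k"
    using poly_coeffwise_convergent_subseq[where Q=Q, OF deg] by blast
  have "(\<lambda>n. coeff_sqnorm p (Q (r n))) \<longlonglongrightarrow> coeff_sqnorm p L"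
    unfolding coeff_sqnorm_def by (intro tendsto_intros lim)
  then have "coeff_sqnorm p L = 1"
    using unit LIMSEQ_unique[OF _ tendsto_const] by simp
  moreover have "(\<lambda>n. integral {0..1} (\<lambda>x. (poly (Q n) x)\<^sup>2)) \<longlonglongrightarrow> 0"
    using less_imp_le[OF small] integral_poly_sq_nonneg
    by (intro tendsto_sandwich[OF _ _ tendsto_const LIMSEQ_inverse_real_of_nat] always_eventually allI)
  then have "L = 0"
    using deg deg_L lim LIMSEQ_subseq_LIMSEQ[OF _ r]
    by (intro eq_0_if_integral_poly_sq_tendsto_0[where Q="Q \<circ> r"]) (auto simp: comp_def)
  ultimately show False by (simp add: coeff_sqnorm_def)
qed

lemma le_Inf_mult:
  fixes a b :: real
  assumes "S \<noteq> {}" "0 \<le> b" "\<And>C. C \<in> S \<Longrightarrow> a \<le> C * b"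
  shows "a \<le> Inf S * b"
proof (cases "b = 0")
  case True
  then show ?thesis using assms(1,3) by fastforce
next
  case False
  then have "a / b \<le> Inf S"
    using assms by (intro cInf_greatest) (simp_all add: divide_le_eq)
  then show ?thesis using assms(2) False by (simp add: divide_le_eq)
qed

lemma univariate_inverse_ineq_bounded:
  "\<exists>C\<ge>0. \<forall>q::real poly. degree q \<le> p \<longrightarrow>
     L2_norm_on {0..1} (poly (pderiv q)) \<le> C * L2_norm_on {0..1} (poly q)"
proof -
  obtain m where m: "0 < m" and lower: "\<And>q::real poly. degree q \<le> p \<Longrightarrow>
      m * coeff_sqnorm p q \<le> integral {0..1} (\<lambda>x. (poly q x)\<^sup>2)"
    using coeff_sqnorm_le_integral_poly_sq[of p] by blast
  define C where "C = sqrt ((real p + 1) ^ 3 / m)"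
  have "L2_norm_on {0..1} (poly (pderiv q)) \<le> C * L2_norm_on {0..1} (poly q)"
    if deg: "degree q \<le> p" for q :: "real poly"
  proof -
    have "integral {0..1} (\<lambda>x. (poly (pderiv q) x)\<^sup>2) \<le> (real p + 1) * coeff_sqnorm p (pderiv q)"
      using deg degree_pderiv[of q] by (intro integral_poly_sq_le_coeff_sqnorm) simp
    also have "\<dots> \<le> (real p + 1) * ((real p + 1)\<^sup>2 * coeff_sqnorm p q)"
      using coeff_sqnorm_pderiv_le[OF deg] by (intro mult_left_mono) simp_all
    also have "\<dots> = ((real p + 1) ^ 3 / m) * (m * coeff_sqnorm p q)"
      using m by (simp add: power2_eq_square power3_eq_cube)
    also have "\<dots> \<le> ((real p + 1) ^ 3 / m) * integral {0..1} (\<lambda>x. (poly q x)\<^sup>2)"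
      using m lower[OF deg] by (intro mult_left_mono) simp_all
    finally show ?thesis
      unfolding L2_norm_on_def C_def real_sqrt_mult[symmetric] by (rule real_sqrt_le_mono)
  qed
  then show ?thesis using m by (intro exI[of _ C]) (simp add: C_def)
qed

lemma
  fixes q :: "real poly"
  shows best_const_1_nonneg: "0 \<le> best_const_1 p"
    and L2_norm_pderiv_le_best_const_1: "degree q \<le> p \<Longrightarrow>
      L2_norm_on {0..1} (poly (pderiv q)) \<le> best_const_1 p * L2_norm_on {0..1} (poly q)"
proof -
  let ?S = "{C. 0 \<le> C \<and> (\<forall>q :: real poly. degree q \<le> p \<longrightarrow>
        L2_norm_on {0..1} (poly (pderiv q)) \<le> C * L2_norm_on {0..1} (poly q))}"
  have S: "?S \<noteq> {}" using univariate_inverse_ineq_bounded[of p] by auto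
  show "0 \<le> best_const_1 p"
    unfolding best_const_1_def by (rule cInf_greatest[OF S]) auto
  show "L2_norm_on {0..1} (poly (pderiv q)) \<le> best_const_1 p * L2_norm_on {0..1} (poly q)"
    if "degree q \<le> p"
    unfolding best_const_1_def using that
    by (intro le_Inf_mult[OF S]) (auto simp: L2_norm_on_def integral_poly_sq_nonneg)
qed

lemma integral_pderiv_sq_le_best_const_1:
  fixes q :: "real poly"
  assumes "degree q \<le> p"
  shows "integral {0..1} (\<lambda>s. (poly (pderiv q) s)\<^sup>2)
           \<le> (best_const_1 p)\<^sup>2 * integral {0..1} (\<lambda>s. (poly q s)\<^sup>2)"
proof -
  have "(L2_norm_on {0..1} (poly (pderiv q)))\<^sup>2 \<le> (best_const_1 p * L2_norm_on {0..1} (poly q))\<^sup>2"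
    using L2_norm_pderiv_le_best_const_1[OF assms]
    by (intro power_mono) (simp_all add: L2_norm_on_def integral_poly_sq_nonneg)
  then show ?thesis
    by (simp add: L2_norm_on_def power_mult_distrib integral_poly_sq_nonneg)
qed

lemma integral_rescale_01:
  fixes f :: "real \<Rightarrow> real"
  assumes "a < b" "f integrable_on {a..b}"
  shows "integral {0..1} (\<lambda>s. f (a + (b - a) * s)) = integral {a..b} f / (b - a)"
proof -
  have "((\<lambda>s. f ((b - a) *\<^sub>R s + a)) has_integral (integral {a..b} f /\<^sub>R (b - a) ^ DIM(real)))
      (cbox ((a - a) /\<^sub>R (b - a)) ((b - a) /\<^sub>R (b - a)))"
    using assms by (intro has_integral_affinity' integrable_integral) auto
  then show ?thesis
    using assms(1) by (intro integral_unique) (simp add: field_simps)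
qed

lemma integral_pderiv_sq_le_on_interval:
  fixes q :: "real poly"
  assumes deg: "degree q \<le> p" and c: "0 < c" "c \<le> b - a"
  shows "integral {a..b} (\<lambda>s. (poly (pderiv q) s)\<^sup>2)
           \<le> (best_const_1 p / c)\<^sup>2 * integral {a..b} (\<lambda>s. (poly q s)\<^sup>2)"
proof -
  define C where "C = best_const_1 p"
  define X where "X = integral {a..b} (\<lambda>s. (poly (pderiv q) s)\<^sup>2)"
  define Y where "Y = integral {a..b} (\<lambda>s. (poly q s)\<^sup>2)"
  have ab: "a < b" using c by simp
  define r where "r = q \<circ>\<^sub>p [:a, b - a:]"
  have deg_r: "degree r \<le> p"
    using deg ab by (simp add: r_def degree_pcompose)
  have "integral {0..1} (\<lambda>s. (poly r s)\<^sup>2) = Y / (b - a)"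
    unfolding Y_def r_def poly_pcompose
    by (subst integral_rescale_01[OF ab, symmetric]) (simp_all add: integrable_poly_sq ac_simps)
  moreover have "integral {0..1} (\<lambda>s. (poly (pderiv r) s)\<^sup>2) = (b - a) * X"
  proof -
    have "poly (pderiv r) s = (b - a) * poly (pderiv q) (a + (b - a) * s)" for s
      by (simp add: r_def pderiv_pcompose poly_pcompose pderiv_pCons ac_simps)
    then have "integral {0..1} (\<lambda>s. (poly (pderiv r) s)\<^sup>2)
        = (b - a)\<^sup>2 * integral {0..1} (\<lambda>s. (poly (pderiv q) (a + (b - a) * s))\<^sup>2)"
      by (simp add: power_mult_distrib)
    also have "\<dots> = (b - a)\<^sup>2 * (X / (b - a))"
      unfolding X_def by (subst integral_rescale_01[OF ab]) (simp_all add: integrable_poly_sq)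
    also have "\<dots> = (b - a) * X"
      using ab by (simp add: power2_eq_square)
    finally show ?thesis .
  qed
  ultimately have "(b - a) * X \<le> C\<^sup>2 * (Y / (b - a))"
    using integral_pderiv_sq_le_best_const_1[OF deg_r] by (simp add: C_def)
  then have "(b - a) * X / (b - a) \<le> C\<^sup>2 * (Y / (b - a)) / (b - a)"
    using ab by (intro divide_right_mono) simp_all
  then have "X \<le> C\<^sup>2 / (b - a)\<^sup>2 * Y"
    using ab by (simp add: power2_eq_square)
  also have "\<dots> \<le> C\<^sup>2 / c\<^sup>2 * Y"
    using c by (intro mult_right_mono divide_left_mono power_mono)
      (simp_all add: Y_def integral_poly_sq_nonneg)
  finally show ?thesis by (simp add: X_def Y_def C_def power_divide)
qed

definition dir_deriv :: "'a::real_normed_vector \<Rightarrow> ('a \<Rightarrow> real) \<Rightarrow> 'a \<Rightarrow> real" where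
  "dir_deriv w v x = deriv (\<lambda>t. v (x + t *\<^sub>R w)) 0"

lemma partial_eq_dir_deriv: "partial i v = dir_deriv (axis i 1) v"
  by (simp add: fun_eq_iff partial_def dir_deriv_def)

lemma dir_deriv_eq_derivative:
  assumes "(v has_derivative v') (at x)"
  shows "dir_deriv w v x = v' w"
proof -
  have "((\<lambda>t. v (x + t *\<^sub>R w)) has_derivative (\<lambda>t. v' (t *\<^sub>R w))) (at 0)"
  proof (rule has_derivative_compose[where g=v])
    show "((\<lambda>t. x + t *\<^sub>R w) has_derivative (\<lambda>t. t *\<^sub>R w)) (at 0)"
      by (auto intro!: derivative_eq_intros)
    show "(v has_derivative v') (at (x + 0 *\<^sub>R w))" using assms by simp
  qed
  moreover have "(\<lambda>t. v' (t *\<^sub>R w)) = (*) (v' w)"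
    using linear.scaleR[OF has_derivative_linear[OF assms]] by (auto simp: fun_eq_iff)
  ultimately have "((\<lambda>t. v (x + t *\<^sub>R w)) has_real_derivative v' w) (at 0)"
    by (simp add: has_field_derivative_def)
  then show ?thesis unfolding dir_deriv_def by (rule DERIV_imp_deriv)
qed

lemma dir_deriv_add:
  assumes "v differentiable at x"
  shows "dir_deriv (u + w) v x = dir_deriv u v x + dir_deriv w v x"
proof -
  obtain v' where v': "(v has_derivative v') (at x)"
    using assms by (auto simp: differentiable_def)
  show ?thesis
    using linear_add[OF has_derivative_linear[OF v']] by (simp add: dir_deriv_eq_derivative[OF v'])
qed

lemma dir_deriv_along_line:
  assumes "\<And>t. v (x + t *\<^sub>R w) = poly q t"
  shows "dir_deriv w v (x + s *\<^sub>R w) = poly (pderiv q) s"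
proof -
  have "(\<lambda>t. v (x + s *\<^sub>R w + t *\<^sub>R w)) = (\<lambda>t. poly q (s + t))"
    using assms by (metis add.assoc scaleR_add_left)
  moreover have "((\<lambda>t. poly q (s + t)) has_real_derivative poly (pderiv q) s) (at 0)"
    using DERIV_shift[of "poly q" "poly (pderiv q) s" 0 s] poly_DERIV[of q s]
    by (simp add: add.commute)
  ultimately show ?thesis unfolding dir_deriv_def by (simp add: DERIV_imp_deriv)
qed

lemma has_derivative_monomial_sum:
  "((\<lambda>x. \<Sum>\<alpha>\<in>A. c \<alpha> * (\<Prod>i\<in>UNIV. (x $ i) ^ \<alpha> i)) has_derivative
     (\<lambda>h. \<Sum>\<alpha>\<in>A. c \<alpha> * (\<Sum>j\<in>UNIV. of_nat (\<alpha> j) * h $ j * (x $ j) ^ (\<alpha> j - 1)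
                             * (\<Prod>k\<in>UNIV - {j}. (x $ k) ^ \<alpha> k)))) (at (x :: real ^ 'n))"
  by (rule derivative_eq_intros refl bounded_linear.has_derivative[OF bounded_linear_vec_nth]
      has_derivative_ident)+

lemma
  assumes "v \<in> poly_space p"
  shows differentiable_poly_space: "v differentiable at x"
    and continuous_on_poly_space: "continuous_on UNIV v"
    and continuous_on_dir_deriv_poly_space: "continuous_on UNIV (dir_deriv w v)"
proof -
  obtain c where v: "v = (\<lambda>x. \<Sum>\<alpha>\<in>multi_indices p. c \<alpha> * (\<Prod>i\<in>UNIV. (x $ i) ^ \<alpha> i))"
    using assms unfolding poly_space_def by blast
  show "v differentiable at x"
    unfolding v differentiable_def by (rule exI has_derivative_monomial_sum)+
  show "continuous_on UNIV v"
    unfolding v by (intro continuous_intros)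
  have "dir_deriv w v = (\<lambda>x. \<Sum>\<alpha>\<in>multi_indices p. c \<alpha> * (\<Sum>j\<in>UNIV. of_nat (\<alpha> j) * w $ j
      * (x $ j) ^ (\<alpha> j - 1) * (\<Prod>k\<in>UNIV - {j}. (x $ k) ^ \<alpha> k)))"
    unfolding v by (rule ext dir_deriv_eq_derivative has_derivative_monomial_sum)+
  then show "continuous_on UNIV (dir_deriv w v)"
    by (simp, intro continuous_intros)
qed

lemma poly_space_restrict_line:
  fixes v :: "real ^ 'n \<Rightarrow> real"
  assumes "v \<in> poly_space p"
  obtains q where "degree q \<le> p" "\<And>t. v (x + t *\<^sub>R w) = poly q t"
proof -
  obtain c where v: "v = (\<lambda>x. \<Sum>\<alpha>\<in>multi_indices p. c \<alpha> * (\<Prod>i\<in>UNIV. (x $ i) ^ \<alpha> i))"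
    using assms unfolding poly_space_def by blast
  define q where "q = (\<Sum>\<alpha>\<in>multi_indices p. smult (c \<alpha>) (\<Prod>i\<in>UNIV. [:x $ i, w $ i:] ^ \<alpha> i))"
  have deg_term: "degree (smult (c \<alpha>) (\<Prod>i\<in>UNIV. [:x $ i, w $ i:] ^ \<alpha> i)) \<le> p"
    if "\<alpha> \<in> multi_indices p" for \<alpha>
  proof -
    have "degree (smult (c \<alpha>) (\<Prod>i\<in>UNIV. [:x $ i, w $ i:] ^ \<alpha> i))
        \<le> degree (\<Prod>i\<in>UNIV. [:x $ i, w $ i:] ^ \<alpha> i)"
      by (rule degree_smult_le)
    also have "\<dots> \<le> (\<Sum>i\<in>UNIV. degree ([:x $ i, w $ i:] ^ \<alpha> i))"
      using degree_prod_sum_le[of UNIV "\<lambda>i. [:x $ i, w $ i:] ^ \<alpha> i"] by (simp add: comp_def)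
    also have "\<dots> \<le> (\<Sum>i\<in>UNIV. \<alpha> i)"
    proof (rule sum_mono)
      fix i
      have "degree ([:x $ i, w $ i:] ^ \<alpha> i) \<le> degree [:x $ i, w $ i:] * \<alpha> i"
        by (rule degree_power_le)
      also have "\<dots> \<le> \<alpha> i" by (cases "w $ i = 0") auto
      finally show "degree ([:x $ i, w $ i:] ^ \<alpha> i) \<le> \<alpha> i" .
    qed
    also have "\<dots> \<le> p" using that by (simp add: multi_indices_def)
    finally show ?thesis .
  qed
  show thesis
  proof (rule that)
    show "degree q \<le> p"
    proof (cases "finite (multi_indices p :: ('n \<Rightarrow> nat) set)")
      case True
      then show ?thesis unfolding q_def by (intro degree_sum_le deg_term)
    qed (simp add: q_def)
    show "v (x + t *\<^sub>R w) = poly q t" for t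
      unfolding q_def v by (simp add: poly_sum poly_prod poly_power algebra_simps)
  qed
qed

lemma convex_compact_line_section:
  fixes K :: "'a::real_normed_vector set"
  assumes "convex K" "compact K" "w \<noteq> 0"
  obtains a b where "{s. x + s *\<^sub>R w \<in> K} = {a..b}"
proof -
  let ?S = "{s. x + s *\<^sub>R w \<in> K}"
  have "convex ?S"
  proof (rule convexI)
    fix s t u v :: real assume "s \<in> ?S" "t \<in> ?S" "0 \<le> u" "0 \<le> v" "u + v = 1"
    moreover have "x + (u * s + v * t) *\<^sub>R w = u *\<^sub>R (x + s *\<^sub>R w) + v *\<^sub>R (x + t *\<^sub>R w)"
      using \<open>u + v = 1\<close> by (simp add: algebra_simps flip: scaleR_add_left)
    ultimately show "u *\<^sub>R s + v *\<^sub>R t \<in> ?S"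
      using convexD[OF assms(1)] by simp
  qed
  moreover have "closed ?S"
    using compact_imp_closed[OF assms(2)]
    by (intro continuous_closed_vimage[unfolded vimage_def]) (auto intro!: continuous_intros)
  moreover have "bounded ?S"
  proof -
    obtain B where B: "\<And>y. y \<in> K \<Longrightarrow> norm y \<le> B"
      using compact_imp_bounded[OF assms(2)] by (auto simp: bounded_iff)
    have "\<bar>s\<bar> \<le> (B + norm x) / norm w" if "s \<in> ?S" for s
    proof -
      have "\<bar>s\<bar> * norm w = norm ((x + s *\<^sub>R w) - x)" by simp
      also have "\<dots> \<le> B + norm x"
        using B that norm_triangle_ineq4[of "x + s *\<^sub>R w" x] by force
      finally show ?thesis using assms(3) by (simp add: field_simps)
    qed
    then show ?thesis by (auto simp: bounded_iff)
  qed
  ultimately have "\<exists>a b. ?S = {a..b}"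
    by (simp add: connected_compact_interval_1[symmetric] convex_connected compact_eq_bounded_closed)
  then show thesis using that by blast
qed

lemma nn_integral_by_lines:
  fixes F :: "real ^ 'n \<Rightarrow> ennreal" and w :: "real ^ 'n"
  assumes F[measurable]: "F \<in> borel_measurable borel" and w: "w $ i = 1"
  shows "(\<integral>\<^sup>+x. F x \<partial>lborel) =
    (\<integral>\<^sup>+x. indicator {x. 0 \<le> x $ i \<and> x $ i \<le> 1} x * (\<integral>\<^sup>+s. F (x + s *\<^sub>R w) \<partial>lborel) \<partial>lborel)"
proof -
  define \<psi> :: "real ^ 'n \<Rightarrow> ennreal" where "\<psi> = indicator {x. 0 \<le> x $ i \<and> x $ i \<le> 1}"
  have [measurable]: "\<psi> \<in> borel_measurable borel" unfolding \<psi>_def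
    by (intro borel_measurable_indicator borel_closed closed_Collect_conj closed_Collect_le
        continuous_intros)
  have "(\<integral>\<^sup>+x. \<psi> x * (\<integral>\<^sup>+s. F (x + s *\<^sub>R w) \<partial>lborel) \<partial>lborel)
      = (\<integral>\<^sup>+s. (\<integral>\<^sup>+x. \<psi> x * F (x + s *\<^sub>R w) \<partial>lborel) \<partial>lborel)"
    by (subst nn_integral_cmult[symmetric]) (auto intro!: lborel_pair.Fubini')
  also have "\<dots> = (\<integral>\<^sup>+s. (\<integral>\<^sup>+y. \<psi> (y - s *\<^sub>R w) * F y \<partial>lborel) \<partial>lborel)"
  proof (rule nn_integral_cong)
    fix s :: real
    have "(\<integral>\<^sup>+y. \<psi> (y - s *\<^sub>R w) * F y \<partial>lborel)
        = (\<integral>\<^sup>+y. \<psi> (y - s *\<^sub>R w) * F y \<partial>distr lborel borel ((+) (s *\<^sub>R w)))"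
      by (simp add: lborel_distr_plus)
    also have "\<dots> = (\<integral>\<^sup>+x. \<psi> x * F (x + s *\<^sub>R w) \<partial>lborel)"
      by (subst nn_integral_distr) (auto simp: add.commute)
    finally show "(\<integral>\<^sup>+x. \<psi> x * F (x + s *\<^sub>R w) \<partial>lborel) = (\<integral>\<^sup>+y. \<psi> (y - s *\<^sub>R w) * F y \<partial>lborel)"
      by simp
  qed
  also have "\<dots> = (\<integral>\<^sup>+y. (\<integral>\<^sup>+s. \<psi> (y - s *\<^sub>R w) \<partial>lborel) * F y \<partial>lborel)"
    by (subst lborel_pair.Fubini') (auto intro!: nn_integral_cong nn_integral_multc)
  (* Every line y + R w meets the slab 0 <= x$i <= 1 in a parameter interval of length 1. *)
  also have "\<dots> = (\<integral>\<^sup>+y. F y \<partial>lborel)"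
  proof (rule nn_integral_cong)
    fix y :: "real ^ 'n"
    have "(\<integral>\<^sup>+s. \<psi> (y - s *\<^sub>R w) \<partial>lborel) = (\<integral>\<^sup>+s. indicator {y $ i - 1 .. y $ i} s \<partial>lborel)"
      by (rule nn_integral_cong) (auto simp: \<psi>_def indicator_def w)
    then show "(\<integral>\<^sup>+s. \<psi> (y - s *\<^sub>R w) \<partial>lborel) * F y = F y" by simp
  qed
  finally show ?thesis unfolding \<psi>_def by simp
qed

lemma nn_integral_line_dir_deriv_sq_le:
  fixes v :: "real ^ 'n \<Rightarrow> real"
  assumes v: "v \<in> poly_space p" and c: "0 < c" and GK: "G \<subseteq> K"
    and chord: "{s. x + s *\<^sub>R w \<in> K} = {a..b}"
    and long: "\<And>y. y \<in> G \<Longrightarrow> \<exists>t. y + t *\<^sub>R w \<in> K \<and> y + (t + c) *\<^sub>R w \<in> K"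
  shows "(\<integral>\<^sup>+s. indicator G (x + s *\<^sub>R w) * ennreal ((dir_deriv w v (x + s *\<^sub>R w))\<^sup>2) \<partial>lborel)
    \<le> ennreal ((best_const_1 p / c)\<^sup>2) *
        (\<integral>\<^sup>+s. indicator K (x + s *\<^sub>R w) * ennreal ((v (x + s *\<^sub>R w))\<^sup>2) \<partial>lborel)"
proof (cases "\<exists>s. x + s *\<^sub>R w \<in> G")
  case False
  then show ?thesis by (simp add: indicator_def)
next
  case True
  then obtain s0 where "x + s0 *\<^sub>R w \<in> G" by blast
  from long[OF this] obtain t
    where "x + s0 *\<^sub>R w + t *\<^sub>R w \<in> K" "x + s0 *\<^sub>R w + (t + c) *\<^sub>R w \<in> K"
    by blast
  then have "s0 + t \<in> {a..b}" "s0 + t + c \<in> {a..b}"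
    unfolding chord[symmetric] by (simp_all add: algebra_simps)
  then have "c \<le> b - a" by simp
  obtain q where deg: "degree q \<le> p" and q: "\<And>t. v (x + t *\<^sub>R w) = poly q t"
    using poly_space_restrict_line[OF v] by metis
  have "(\<integral>\<^sup>+s. indicator G (x + s *\<^sub>R w) * ennreal ((dir_deriv w v (x + s *\<^sub>R w))\<^sup>2) \<partial>lborel)
      \<le> (\<integral>\<^sup>+s. ennreal ((poly (pderiv q) s)\<^sup>2) * indicator {a..b} s \<partial>lborel)"
    using GK chord
    by (intro nn_integral_mono) (auto simp: dir_deriv_along_line[OF q] indicator_def set_eq_iff)
  also have "\<dots> = ennreal (integral {a..b} (\<lambda>s. (poly (pderiv q) s)\<^sup>2))"
    by (intro nn_integral_has_integral_lebesgue' integrable_integral integrable_poly_sq) simp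
  also have "\<dots> \<le> ennreal ((best_const_1 p / c)\<^sup>2 * integral {a..b} (\<lambda>s. (poly q s)\<^sup>2))"
    using integral_pderiv_sq_le_on_interval[OF deg c \<open>c \<le> b - a\<close>] by (rule ennreal_leI)
  also have "\<dots> = ennreal ((best_const_1 p / c)\<^sup>2) * ennreal (integral {a..b} (\<lambda>s. (poly q s)\<^sup>2))"
    by (simp add: ennreal_mult integral_poly_sq_nonneg)
  also have "ennreal (integral {a..b} (\<lambda>s. (poly q s)\<^sup>2))
      = (\<integral>\<^sup>+s. ennreal ((poly q s)\<^sup>2) * indicator {a..b} s \<partial>lborel)"
    by (intro nn_integral_has_integral_lebesgue'[symmetric] integrable_integral integrable_poly_sq) simp
  also have "\<dots> = (\<integral>\<^sup>+s. indicator K (x + s *\<^sub>R w) * ennreal ((v (x + s *\<^sub>R w))\<^sup>2) \<partial>lborel)"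
    using chord by (intro nn_integral_cong) (auto simp: q indicator_def set_eq_iff)
  finally show ?thesis .
qed

lemma nn_integral_dir_deriv_sq_le:
  fixes v :: "real ^ 'n \<Rightarrow> real"
  assumes v: "v \<in> poly_space p" and w: "w $ i = 1" and c: "0 < c"
    and K: "convex K" "compact K" and G[measurable]: "G \<in> sets borel" and GK: "G \<subseteq> K"
    and long: "\<And>y. y \<in> G \<Longrightarrow> \<exists>t. y + t *\<^sub>R w \<in> K \<and> y + (t + c) *\<^sub>R w \<in> K"
  shows "(\<integral>\<^sup>+x. indicator G x * ennreal ((dir_deriv w v x)\<^sup>2) \<partial>lborel)
          \<le> ennreal ((best_const_1 p / c)\<^sup>2) * (\<integral>\<^sup>+x. indicator K x * ennreal ((v x)\<^sup>2) \<partial>lborel)"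
proof -
  define M where "M = ennreal ((best_const_1 p / c)\<^sup>2)"
  define \<psi> :: "real ^ 'n \<Rightarrow> ennreal" where "\<psi> = indicator {x. 0 \<le> x $ i \<and> x $ i \<le> 1}"
  have K_borel[measurable]: "K \<in> sets borel" using K(2) by (rule borel_compact)
  have borel[measurable]: "dir_deriv w v \<in> borel_measurable borel" "v \<in> borel_measurable borel"
    using borel_measurable_continuous_onI[OF continuous_on_dir_deriv_poly_space[OF v]]
      borel_measurable_continuous_onI[OF continuous_on_poly_space[OF v]] by auto
  have weighted_sq: "(\<lambda>x. indicator A x * ennreal ((f x)\<^sup>2)) \<in> borel_measurable borel"
    if "A \<in> sets borel" "f \<in> borel_measurable borel" for A and f :: "real ^ 'n \<Rightarrow> real"
    using that by measurable
  have [measurable]: "\<psi> \<in> borel_measurable borel" unfolding \<psi>_def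
    by (intro borel_measurable_indicator borel_closed closed_Collect_conj closed_Collect_le
        continuous_intros)
  have "w \<noteq> 0" using w by (metis zero_index zero_neq_one)
  define line_G where "line_G x =
    (\<integral>\<^sup>+s. indicator G (x + s *\<^sub>R w) * ennreal ((dir_deriv w v (x + s *\<^sub>R w))\<^sup>2) \<partial>lborel)" for x
  define line_K where "line_K x =
    (\<integral>\<^sup>+s. indicator K (x + s *\<^sub>R w) * ennreal ((v (x + s *\<^sub>R w))\<^sup>2) \<partial>lborel)" for x
  have "(\<integral>\<^sup>+x. indicator G x * ennreal ((dir_deriv w v x)\<^sup>2) \<partial>lborel) = (\<integral>\<^sup>+x. \<psi> x * line_G x \<partial>lborel)"
    unfolding \<psi>_def line_G_def by (rule nn_integral_by_lines[OF weighted_sq[OF G borel(1)] w])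
  also have "\<dots> \<le> (\<integral>\<^sup>+x. M * (\<psi> x * line_K x) \<partial>lborel)"
  proof (rule nn_integral_mono)
    fix x
    obtain a b where "{s. x + s *\<^sub>R w \<in> K} = {a..b}"
      using convex_compact_line_section[OF K \<open>w \<noteq> 0\<close>] by blast
    then have "line_G x \<le> M * line_K x"
      unfolding M_def line_G_def line_K_def
      by (rule nn_integral_line_dir_deriv_sq_le[OF v c GK]) (rule long)
    then show "\<psi> x * line_G x \<le> M * (\<psi> x * line_K x)"
      unfolding mult.left_commute[of M] by (rule mult_left_mono) simp
  qed
  also have "\<dots> = M * (\<integral>\<^sup>+x. \<psi> x * line_K x \<partial>lborel)"
    unfolding line_K_def by (rule nn_integral_cmult) measurable
  also have "\<dots> = M * (\<integral>\<^sup>+x. indicator K x * ennreal ((v x)\<^sup>2) \<partial>lborel)"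
    unfolding \<psi>_def line_K_def
    by (subst nn_integral_by_lines[OF weighted_sq[OF K_borel borel(2)] w]) (rule refl)
  finally show ?thesis unfolding M_def .
qed

lemma sum_component_add_scaleR:
  "(\<Sum>j\<in>UNIV. (y + t *\<^sub>R w) $ j) = (\<Sum>j\<in>UNIV. y $ j) + t * (\<Sum>j\<in>UNIV. w $ j)"
  by (simp add: sum.distrib sum_distrib_left)

lemma sum_component_axis: "(\<Sum>j\<in>UNIV. axis i (1::real) $ j) = 1"
  by (simp add: axis_def)

lemma mem_unit_simplex: "x \<in> unit_simplex \<longleftrightarrow> (\<forall>j. 0 \<le> x $ j) \<and> (\<Sum>j\<in>UNIV. x $ j) \<le> 1"
  by (simp add: unit_simplex_def)

lemma convex_unit_simplex: "convex (unit_simplex :: (real ^ 'n) set)"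
proof (rule convexI)
  fix x y :: "real ^ 'n" and u v :: real
  assume "x \<in> unit_simplex" "y \<in> unit_simplex" "0 \<le> u" "0 \<le> v" "u + v = 1"
  moreover have "(\<Sum>j\<in>UNIV. (u *\<^sub>R x + v *\<^sub>R y) $ j) = u * (\<Sum>j\<in>UNIV. x $ j) + v * (\<Sum>j\<in>UNIV. y $ j)"
    by (simp add: sum.distrib sum_distrib_left)
  ultimately show "u *\<^sub>R x + v *\<^sub>R y \<in> unit_simplex"
    unfolding unit_simplex_def
    by (auto intro!: convex_bound_le)
qed

lemma compact_unit_simplex: "compact (unit_simplex :: (real ^ 'n) set)"
proof -
  have "closed (unit_simplex :: (real ^ 'n) set)"
    unfolding unit_simplex_def
    by (intro closed_Collect_conj closed_Collect_all closed_Collect_le continuous_intros)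
  moreover have "norm x \<le> 1" if "x \<in> unit_simplex" for x :: "real ^ 'n"
  proof -
    have "norm x \<le> (\<Sum>j\<in>UNIV. \<bar>x $ j\<bar>)" by (rule norm_le_l1_cart)
    also have "\<dots> = (\<Sum>j\<in>UNIV. x $ j)" using that by (simp add: unit_simplex_def)
    also have "\<dots> \<le> 1" using that by (simp add: unit_simplex_def)
    finally show ?thesis .
  qed
  then have "bounded (unit_simplex :: (real ^ 'n) set)" by (auto simp: bounded_iff)
  ultimately show ?thesis by (simp add: compact_eq_bounded_closed)
qed

lemma unit_simplex_long_chord_axis:
  assumes "y \<in> unit_simplex" "0 \<le> c" "c \<le> 1 - (\<Sum>j\<in>UNIV. y $ j) + y $ i"
  shows "\<exists>t. y + t *\<^sub>R axis i 1 \<in> unit_simplex \<and> y + (t + c) *\<^sub>R axis i 1 \<in> unit_simplex"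
proof (intro exI conjI)
  show "y + (- y $ i) *\<^sub>R axis i 1 \<in> unit_simplex" "y + (- y $ i + c) *\<^sub>R axis i 1 \<in> unit_simplex"
    using assms unfolding mem_unit_simplex sum_component_add_scaleR sum_component_axis
    by (auto simp: axis_def)
qed

lemma unit_simplex_long_chord_axis_diff:
  fixes y :: "real ^ 'n"
  assumes "k \<noteq> i" "y \<in> unit_simplex" "0 \<le> c" "c \<le> y $ k"
  shows "\<exists>t. y + t *\<^sub>R (axis i 1 - axis k 1) \<in> unit_simplex
           \<and> y + (t + c) *\<^sub>R (axis i 1 - axis k 1) \<in> unit_simplex"
proof (intro exI conjI)
  have yi: "0 \<le> y $ i" using assms(2) by (simp add: mem_unit_simplex)
  have "(\<Sum>j\<in>UNIV. (axis i 1 - axis k 1 :: real ^ 'n) $ j) = 0"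
    by (simp add: sum_subtractf sum_component_axis)
  then show "y + (- y $ i) *\<^sub>R (axis i 1 - axis k 1) \<in> unit_simplex"
      "y + (- y $ i + c) *\<^sub>R (axis i 1 - axis k 1) \<in> unit_simplex"
    using assms unfolding mem_unit_simplex sum_component_add_scaleR
    by (auto simp: axis_def) (use yi in linarith)+
qed

lemma unit_simplex_cover:
  fixes y :: "real ^ 'n"
  assumes d: "2 \<le> CARD('n)" and y: "y \<in> unit_simplex"
  shows "1 / 2 \<le> 1 - (\<Sum>j\<in>UNIV. y $ j) + y $ i \<or> (\<exists>k. k \<noteq> i \<and> 1 / (2 * real (CARD('n) - 1)) \<le> y $ k)"
proof (rule ccontr)
  define c where "c = 1 / (2 * real (CARD('n) - 1))"
  assume "\<not> ?thesis"
  then have far: "1 - (\<Sum>j\<in>UNIV. y $ j) + y $ i < 1 / 2" and small: "\<And>k. k \<noteq> i \<Longrightarrow> y $ k < c"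
    unfolding c_def by (auto simp: not_le)
  have "UNIV - {i} \<noteq> {}"
  proof
    assume "UNIV - {i} = {}"
    then have "UNIV = {i}" by auto
    then show False using d unfolding \<open>UNIV = {i}\<close> by simp
  qed
  then have "(\<Sum>j\<in>UNIV - {i}. y $ j) < (\<Sum>j\<in>UNIV - {i}. c)"
    using small by (intro sum_strict_mono) auto
  also have "\<dots> = 1 / 2"
    using d by (simp add: c_def card_Diff_singleton)
  finally show False
    using far sum.remove[of UNIV i "\<lambda>j. y $ j"] by simp
qed

lemma
  fixes f :: "'a::euclidean_space \<Rightarrow> real"
  assumes "compact K" "continuous_on K f"
  shows integrable_sq_on_compact: "(\<lambda>x. (f x)\<^sup>2) integrable_on K"
    and nn_integral_sq_eq_integral:
      "(\<integral>\<^sup>+x. indicator K x * ennreal ((f x)\<^sup>2) \<partial>lborel) = ennreal (integral K (\<lambda>x. (f x)\<^sup>2))"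
proof -
  have "set_integrable lborel K (\<lambda>x. (f x)\<^sup>2)"
    unfolding set_integrable_def
    by (intro borel_integrable_compact assms continuous_intros)
  then show int: "(\<lambda>x. (f x)\<^sup>2) integrable_on K"
    by (rule set_borel_integral_eq_integral(1))
  show "(\<integral>\<^sup>+x. indicator K x * ennreal ((f x)\<^sup>2) \<partial>lborel) = ennreal (integral K (\<lambda>x. (f x)\<^sup>2))"
    using nn_integral_has_integral_lebesgue'[OF _ integrable_integral[OF int]]
    by (simp add: mult.commute)
qed

lemma cubic_le_pow8: "1 \<le> m \<Longrightarrow> 4 + 16 * (real m) ^ 3 \<le> 5 / 2 * 8 ^ m"
proof (induction m rule: dec_induct)
  case (step m)
  have "(real m + 1) ^ 3 \<le> (2 * real m) ^ 3"
    using step(1) by (intro power_mono) auto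
  then have "4 + 16 * (real (Suc m)) ^ 3 \<le> 8 * (4 + 16 * (real m) ^ 3)"
    by (simp add: power_mult_distrib add.commute)
  also have "\<dots> \<le> 8 * (5 / 2 * 8 ^ m)" using step(3) by simp
  finally show ?case by simp
qed simp

lemma partial_sq_le_dir_deriv_split:
  assumes "v differentiable at x"
  shows "(partial i v x)\<^sup>2 \<le> 2 * (dir_deriv (axis i 1 - axis k 1) v x)\<^sup>2 + 2 * (dir_deriv (axis k 1) v x)\<^sup>2"
proof -
  have "partial i v x = dir_deriv (axis i 1 - axis k 1) v x + dir_deriv (axis k 1) v x"
    using dir_deriv_add[where u="axis i 1 - axis k 1" and w="axis k 1", OF assms]
    by (simp add: partial_eq_dir_deriv)
  then show ?thesis by (simp add: power2_sum_le)
qed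

lemma nn_integral_axis_dir_deriv_sq_le:
  fixes v :: "real ^ 'n \<Rightarrow> real"
  assumes v: "v \<in> poly_space p" and c: "0 < c" and G: "G \<in> sets borel"
    and G_sub: "G \<subseteq> {y \<in> unit_simplex. c \<le> 1 - (\<Sum>j\<in>UNIV. y $ j) + y $ i}"
  shows "(\<integral>\<^sup>+x. indicator G x * ennreal ((dir_deriv (axis i 1) v x)\<^sup>2) \<partial>lborel)
    \<le> ennreal ((best_const_1 p / c)\<^sup>2) * (\<integral>\<^sup>+x. indicator unit_simplex x * ennreal ((v x)\<^sup>2) \<partial>lborel)"
proof (rule nn_integral_dir_deriv_sq_le[where i=i, OF v _ c convex_unit_simplex compact_unit_simplex G])
  fix y assume "y \<in> G"
  then show "\<exists>t. y + t *\<^sub>R axis i 1 \<in> unit_simplex \<and> y + (t + c) *\<^sub>R axis i 1 \<in> unit_simplex"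
    using G_sub c by (intro unit_simplex_long_chord_axis) auto
qed (use G_sub in auto)

lemma nn_integral_axis_diff_dir_deriv_sq_le:
  fixes v :: "real ^ 'n \<Rightarrow> real"
  assumes v: "v \<in> poly_space p" and c: "0 < c" and G: "G \<in> sets borel" and "k \<noteq> i"
    and G_sub: "G \<subseteq> {y \<in> unit_simplex. c \<le> y $ k}"
  shows "(\<integral>\<^sup>+x. indicator G x * ennreal ((dir_deriv (axis i 1 - axis k 1) v x)\<^sup>2) \<partial>lborel)
    \<le> ennreal ((best_const_1 p / c)\<^sup>2) * (\<integral>\<^sup>+x. indicator unit_simplex x * ennreal ((v x)\<^sup>2) \<partial>lborel)"
proof (rule nn_integral_dir_deriv_sq_le[where i=i, OF v _ c convex_unit_simplex compact_unit_simplex G])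
  fix y assume "y \<in> G"
  then show "\<exists>t. y + t *\<^sub>R (axis i 1 - axis k 1) \<in> unit_simplex
      \<and> y + (t + c) *\<^sub>R (axis i 1 - axis k 1) \<in> unit_simplex"
    using G_sub c \<open>k \<noteq> i\<close> by (intro unit_simplex_long_chord_axis_diff) auto
qed (use G_sub \<open>k \<noteq> i\<close> in \<open>auto simp: axis_def\<close>)

lemma indicator_partial_sq_le_cover:
  fixes v :: "real ^ 'n \<Rightarrow> real"
  assumes "v differentiable at x"
    and cover: "x \<in> unit_simplex \<Longrightarrow>
      c0 \<le> 1 - (\<Sum>j\<in>UNIV. x $ j) + x $ i \<or> (\<exists>k. k \<noteq> i \<and> c1 \<le> x $ k)"
  shows "indicator unit_simplex x * ennreal ((partial i v x)\<^sup>2)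
    \<le> indicator {y \<in> unit_simplex. c0 \<le> 1 - (\<Sum>j\<in>UNIV. y $ j) + y $ i} x
          * ennreal ((dir_deriv (axis i 1) v x)\<^sup>2)
      + (\<Sum>k\<in>UNIV - {i}.
          2 * (indicator {y \<in> unit_simplex. c1 \<le> y $ k} x * ennreal ((dir_deriv (axis i 1 - axis k 1) v x)\<^sup>2))
        + 2 * (indicator {y \<in> unit_simplex. c1 \<le> y $ k} x * ennreal ((dir_deriv (axis k 1) v x)\<^sup>2)))"
    (is "_ \<le> ?near + (\<Sum>k\<in>UNIV - {i}. ?far k)")
proof (cases "x \<in> unit_simplex \<and> \<not> c0 \<le> 1 - (\<Sum>j\<in>UNIV. x $ j) + x $ i")
  case True
  then obtain k where k: "k \<noteq> i" "c1 \<le> x $ k" using cover by blast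
  have "ennreal ((partial i v x)\<^sup>2)
      \<le> ennreal (2 * (dir_deriv (axis i 1 - axis k 1) v x)\<^sup>2 + 2 * (dir_deriv (axis k 1) v x)\<^sup>2)"
    by (rule ennreal_leI[OF partial_sq_le_dir_deriv_split[OF assms(1)]])
  then have "indicator unit_simplex x * ennreal ((partial i v x)\<^sup>2) \<le> ?far k"
    using True k by (simp add: ennreal_plus ennreal_mult)
  also have "\<dots> \<le> (\<Sum>k\<in>UNIV - {i}. ?far k)"
    by (rule member_le_sum) (use k in auto)
  finally show ?thesis by (simp add: add_increasing)
qed (auto simp: partial_eq_dir_deriv split: split_indicator intro: add_increasing2)

lemma nn_integral_partial_sq_le:
  fixes v :: "real ^ 'n \<Rightarrow> real" and i :: 'n
  assumes v: "v \<in> poly_space p" and c0: "0 < c0" and c1: "0 < c1"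
    and cover: "\<And>y. y \<in> unit_simplex \<Longrightarrow>
      c0 \<le> 1 - (\<Sum>j\<in>UNIV. y $ j) + y $ i \<or> (\<exists>k. k \<noteq> i \<and> c1 \<le> y $ k)"
  shows "(\<integral>\<^sup>+x. indicator unit_simplex x * ennreal ((partial i v x)\<^sup>2) \<partial>lborel)
     \<le> ennreal ((best_const_1 p / c0)\<^sup>2 + real (CARD('n) - 1) * (4 * (best_const_1 p / c1)\<^sup>2))
        * (\<integral>\<^sup>+x. indicator unit_simplex x * ennreal ((v x)\<^sup>2) \<partial>lborel)"
proof -
  define G0 where "G0 = {y \<in> unit_simplex. c0 \<le> 1 - (\<Sum>j\<in>UNIV. y $ j) + y $ i}"
  define G :: "'n \<Rightarrow> (real ^ 'n) set" where "G k = {y \<in> unit_simplex. c1 \<le> y $ k}" for k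
  define D where "D w x = ennreal ((dir_deriv w v x)\<^sup>2)" for w x
  define M0 where "M0 = ennreal ((best_const_1 p / c0)\<^sup>2)"
  define M1 where "M1 = ennreal ((best_const_1 p / c1)\<^sup>2)"
  define N where "N = (\<integral>\<^sup>+x. indicator unit_simplex x * ennreal ((v x)\<^sup>2) \<partial>lborel)"
  have [measurable]: "D w \<in> borel_measurable borel" for w
    unfolding D_def using continuous_on_dir_deriv_poly_space[OF v]
    by (intro measurable_compose[OF _ measurable_ennreal] borel_measurable_power
        borel_measurable_continuous_onI)
  have G_borel[measurable]: "G0 \<in> sets borel" "G k \<in> sets borel" for k
    unfolding G0_def G_def unit_simplex_def
    by (auto intro!: borel_closed closed_Collect_conj closed_Collect_all closed_Collect_le
        continuous_intros)
  have bound_i: "(\<integral>\<^sup>+x. indicator G0 x * D (axis i 1) x \<partial>lborel) \<le> M0 * N"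
    unfolding D_def M0_def N_def
    by (rule nn_integral_axis_dir_deriv_sq_le[OF v c0 G_borel(1)]) (auto simp: G0_def)
  have bound_ik: "(\<integral>\<^sup>+x. indicator (G k) x * D (axis i 1 - axis k 1) x \<partial>lborel) \<le> M1 * N"
    if "k \<noteq> i" for k
    unfolding D_def M1_def N_def
    by (rule nn_integral_axis_diff_dir_deriv_sq_le[OF v c1 G_borel(2) that]) (auto simp: G_def)
  have bound_k: "(\<integral>\<^sup>+x. indicator (G k) x * D (axis k 1) x \<partial>lborel) \<le> M1 * N" for k
    unfolding D_def M1_def N_def
    by (rule nn_integral_axis_dir_deriv_sq_le[OF v c1 G_borel(2)]) (auto simp: G_def mem_unit_simplex)
  define F where "F x = indicator G0 x * D (axis i 1) x +
     (\<Sum>k\<in>UNIV - {i}. 2 * (indicator (G k) x * D (axis i 1 - axis k 1) x)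
                       + 2 * (indicator (G k) x * D (axis k 1) x))" for x
  have "indicator unit_simplex x * ennreal ((partial i v x)\<^sup>2) \<le> F x" for x
    using indicator_partial_sq_le_cover[OF differentiable_poly_space[OF v] cover]
    unfolding F_def G0_def G_def D_def .
  then have "(\<integral>\<^sup>+x. indicator unit_simplex x * ennreal ((partial i v x)\<^sup>2) \<partial>lborel) \<le> (\<integral>\<^sup>+x. F x \<partial>lborel)"
    by (rule nn_integral_mono)
  also have "\<dots> = (\<integral>\<^sup>+x. indicator G0 x * D (axis i 1) x \<partial>lborel) +
     (\<Sum>k\<in>UNIV - {i}. 2 * (\<integral>\<^sup>+x. indicator (G k) x * D (axis i 1 - axis k 1) x \<partial>lborel) +
                       2 * (\<integral>\<^sup>+x. indicator (G k) x * D (axis k 1) x \<partial>lborel))"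
    unfolding F_def by (simp add: nn_integral_add nn_integral_sum nn_integral_cmult)
  also have "\<dots> \<le> M0 * N + (\<Sum>k\<in>UNIV - {i}. 2 * (M1 * N) + 2 * (M1 * N))"
    by (intro add_mono bound_i sum_mono mult_left_mono bound_ik bound_k) auto
  also have "\<dots> = (M0 + of_nat (CARD('n) - 1) * (4 * M1)) * N"
    by (simp add: card_Diff_singleton distrib_right mult.assoc flip: mult_2)
  finally show ?thesis
    by (simp add: M0_def M1_def N_def ennreal_plus ennreal_mult ennreal_of_nat_eq_real_of_nat)
qed

lemma unit_simplex_cover_constants:
  fixes i :: "'n::finite"
  obtains c0 c1 :: real where "0 < c0" "0 < c1"
    "\<And>y :: real ^ 'n. y \<in> unit_simplex \<Longrightarrow>
       c0 \<le> 1 - (\<Sum>j\<in>UNIV. y $ j) + y $ i \<or> (\<exists>k. k \<noteq> i \<and> c1 \<le> y $ k)"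
    "1 / c0\<^sup>2 + real (CARD('n) - 1) * (4 / c1\<^sup>2) \<le> 5 / 16 * 8 ^ CARD('n)"
proof (cases "CARD('n) = 1")
  case True
  then have "UNIV - {i} = {}" by (metis card_1_singletonE Diff_cancel singletonD UNIV_I)
  then have "(\<Sum>j\<in>UNIV. y $ j) = y $ i" for y :: "real ^ 'n"
    using sum.remove[of UNIV i "\<lambda>j. y $ j"] unfolding \<open>UNIV - {i} = {}\<close> by simp
  with True show thesis by (intro that[of 1 1]) simp_all
next
  case False
  define d where "d = CARD('n) - 1"
  have "0 < CARD('n)" by simp
  with False have d: "1 \<le> d" "CARD('n) = Suc d"
    unfolding d_def by arith+
  show thesis
  proof (rule that[of "1 / 2" "1 / (2 * real d)"])
    show "0 < 1 / (2 * real d)" using d by simp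
    show "1 / 2 \<le> 1 - (\<Sum>j\<in>UNIV. y $ j) + y $ i \<or> (\<exists>k. k \<noteq> i \<and> 1 / (2 * real d) \<le> y $ k)"
      if "y \<in> unit_simplex" for y :: "real ^ 'n"
      using unit_simplex_cover[OF _ that] d by (simp add: d_def[symmetric])
    have "1 / (1 / 2)\<^sup>2 + real d * (4 / (1 / (2 * real d))\<^sup>2) = 4 + 16 * real d ^ 3"
      by (simp add: power2_eq_square power3_eq_cube field_simps)
    also have "\<dots> \<le> 5 / 16 * 8 ^ CARD('n)"
      using cubic_le_pow8[OF d(1)] d(2) by simp
    finally show "1 / (1 / 2)\<^sup>2 + real (CARD('n) - 1) * (4 / (1 / (2 * real d))\<^sup>2)
        \<le> 5 / 16 * 8 ^ CARD('n)"
      by (simp only: d_def[symmetric])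
  qed simp
qed

lemma integral_partial_sq_le:
  fixes v :: "real ^ 'n \<Rightarrow> real" and i :: 'n
  assumes v: "v \<in> poly_space p"
  shows "integral unit_simplex (\<lambda>x. (partial i v x)\<^sup>2)
     \<le> (sqrt 5 / 4 * (2 * sqrt 2) ^ CARD('n) * best_const_1 p)\<^sup>2 * integral unit_simplex (\<lambda>x. (v x)\<^sup>2)"
proof -
  define C where "C = best_const_1 p"
  define I where "I = integral unit_simplex (\<lambda>x. (v x)\<^sup>2)"
  obtain c0 c1 where c: "0 < c0" "0 < c1"
    and cover: "\<And>y :: real ^ 'n. y \<in> unit_simplex \<Longrightarrow>
       c0 \<le> 1 - (\<Sum>j\<in>UNIV. y $ j) + y $ i \<or> (\<exists>k. k \<noteq> i \<and> c1 \<le> y $ k)"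
    and bound: "1 / c0\<^sup>2 + real (CARD('n) - 1) * (4 / c1\<^sup>2) \<le> 5 / 16 * 8 ^ CARD('n)"
    using unit_simplex_cover_constants[of i] by blast
  define \<beta> where "\<beta> = (C / c0)\<^sup>2 + real (CARD('n) - 1) * (4 * (C / c1)\<^sup>2)"
  have cont: "continuous_on unit_simplex (partial i v)" "continuous_on unit_simplex v"
    using continuous_on_dir_deriv_poly_space[OF v] continuous_on_poly_space[OF v]
    by (auto simp: partial_eq_dir_deriv intro: continuous_on_subset)
  have "I \<ge> 0" unfolding I_def
    by (intro Henstock_Kurzweil_Integration.integral_nonneg
        integrable_sq_on_compact[OF compact_unit_simplex cont(2)]) simp
  moreover have "\<beta> \<ge> 0" unfolding \<beta>_def by simp
  moreover have "ennreal (integral unit_simplex (\<lambda>x. (partial i v x)\<^sup>2)) \<le> ennreal \<beta> * ennreal I"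
    using nn_integral_partial_sq_le[OF v c cover]
    unfolding nn_integral_sq_eq_integral[OF compact_unit_simplex cont(1)]
      nn_integral_sq_eq_integral[OF compact_unit_simplex cont(2)] C_def \<beta>_def I_def .
  ultimately have "integral unit_simplex (\<lambda>x. (partial i v x)\<^sup>2) \<le> \<beta> * I"
    by (simp add: ennreal_mult[symmetric] ennreal_le_iff)
  also have "\<beta> = C\<^sup>2 * (1 / c0\<^sup>2 + real (CARD('n) - 1) * (4 / c1\<^sup>2))"
    by (simp add: \<beta>_def power_divide field_simps)
  also have "\<dots> \<le> C\<^sup>2 * (5 / 16 * 8 ^ CARD('n))"
    using bound by (intro mult_left_mono) simp_all
  also have "\<dots> = (sqrt 5 / 4 * (2 * sqrt 2) ^ CARD('n) * C)\<^sup>2"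
  proof -
    have "((2 * sqrt 2) ^ CARD('n))\<^sup>2 = ((2 * sqrt 2)\<^sup>2) ^ CARD('n)"
      by (metis power_mult mult.commute)
    then show ?thesis by (simp add: power_mult_distrib power_divide)
  qed
  finally show ?thesis
    using \<open>I \<ge> 0\<close> by (simp add: C_def I_def mult_right_mono)
qed

theorem theoremA2:
  fixes p :: nat
  shows "best_const_simplex TYPE('n::finite) p
           \<le> sqrt 5 / 4 * (2 * sqrt 2) ^ CARD('n) * best_const_1 p"
proof -
  define M where "M = sqrt 5 / 4 * (2 * sqrt 2) ^ CARD('n) * best_const_1 p"
  have "0 \<le> M" unfolding M_def using best_const_1_nonneg by simp
  have "L2_norm_on unit_simplex (partial i v) \<le> M * L2_norm_on unit_simplex v"
    if "v \<in> poly_space p" for v :: "real ^ 'n \<Rightarrow> real" and i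
  proof -
    have "L2_norm_on unit_simplex (partial i v) \<le> sqrt (M\<^sup>2 * integral unit_simplex (\<lambda>x. (v x)\<^sup>2))"
      unfolding L2_norm_on_def M_def by (rule real_sqrt_le_mono[OF integral_partial_sq_le[OF that]])
    also have "\<dots> = M * L2_norm_on unit_simplex v"
      using \<open>0 \<le> M\<close> by (simp add: L2_norm_on_def real_sqrt_mult)
    finally show ?thesis .
  qed
  then show ?thesis
    unfolding best_const_simplex_def M_def[symmetric]
    by (intro cInf_lower bdd_belowI[of _ 0]) (auto simp: \<open>0 \<le> M\<close>)
qed

end
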